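(* Let $p$ be a prime and $n\ge1$. Suppose $V_m\to V$ in $\mathcal{Z}$. Then there is $m_0$ such that $V\subset V_m$ for all $m\ge m_0$.
   Context: $\mathcal{L}_{n,p}=\left(\bigoplus_{\mathbb{Z}}(\mathbb{Z}/p\mathbb{Z})^n\right)\rtimes\mathbb{Z}$ and $\mathcal{A}_{n,p}=\bigoplus_{\mathbb{Z}}(\mathbb{Z}/p\mathbb{Z})^n$. ${\rm Sub}(G)$ is the space of subgroups of $G$ with the topology induced from $\{0,1\}^G$, and $\mathcal{Z}={\rm Sub}(\mathcal{L}_{n,p})\setminus{\rm Sub}(\mathcal{A}_{n,p})$, the subgroups of $\mathcal{L}_{n,p}$ not contained in $\mathcal{A}_{n,p}$. *)

theory Defs
  imports "HOL-Algebra.Group" "HOL-Computational_Algebra.Primes"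
begin

text \<open>Elements of L_{n,p}: pairs (f,k) where f : int \<Rightarrow> (Z/pZ)^n is finitely supported
(an element of the direct sum over Z of copies of (Z/pZ)^n, with (Z/pZ)^n encoded as
functions nat \<Rightarrow> int with values in {0..<p} on coordinates < n and 0 elsewhere)
and k : int.  Z acts on the direct sum by shifting the index.\<close>

type_synonym lelem = "(int \<Rightarrow> nat \<Rightarrow> int) \<times> int"

definition lamp_carrier :: "nat \<Rightarrow> nat \<Rightarrow> lelem set" where
  "lamp_carrier n p = {(f, k). (\<forall>z i. 0 \<le> f z i \<and> f z i < int p)
      \<and> (\<forall>z i. n \<le> i \<longrightarrow> f z i = 0)
      \<and> finite {z. f z \<noteq> (\<lambda>_. 0)}}"

definition lamp_mult :: "nat \<Rightarrow> lelem \<Rightarrow> lelem \<Rightarrow> lelem" where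
  "lamp_mult p x y = ((\<lambda>z i. (fst x z i + fst y (z - snd x) i) mod int p), snd x + snd y)"

definition L :: "nat \<Rightarrow> nat \<Rightarrow> lelem monoid" where
  "L n p = \<lparr>carrier = lamp_carrier n p, monoid.mult = lamp_mult p, monoid.one = (\<lambda>z i. 0, 0)\<rparr>"

definition A :: "nat \<Rightarrow> nat \<Rightarrow> lelem set" where
  "A n p = {x \<in> lamp_carrier n p. snd x = 0}"

definition Sub :: "('a, 'b) monoid_scheme \<Rightarrow> 'a set set" where
  "Sub G = {H. subgroup H G}"

definition Zset :: "nat \<Rightarrow> nat \<Rightarrow> lelem set set" where
  "Zset n p = Sub (L n p) - Pow (A n p)"

text \<open>Convergence in Sub(G) with the topology induced from {0,1}^G (product topology):
pointwise eventual agreement of indicator functions.\<close>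
definition sub_converges :: "('a, 'b) monoid_scheme \<Rightarrow> (nat \<Rightarrow> 'a set) \<Rightarrow> 'a set \<Rightarrow> bool" where
  "sub_converges G Vs V \<longleftrightarrow>
     (\<forall>g \<in> carrier G. eventually (\<lambda>m. (g \<in> Vs m) = (g \<in> V)) sequentially)"

end

theory Submission
  imports Defs "HOL-Algebra.Generated_Groups" "HOL-Library.Infinite_Set"
begin

text \<open>Every subgroup V of the lamplighter group that is not contained in the base A is finitely
  generated; since convergence in Sub(G) eventually fixes the membership of each of finitely many
  generators, the limit V is then eventually contained in the approximating subgroups.

  For finite generation pick t \<in> V whose Z-coordinate k is minimal positive. Every element of V
  is an element of V \<inter> A times a power of t, and conjugation by t translates A by k. Only
  finitely many patterns on the window [0, k) occur among elements of V \<inter> A supported in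
  [0, \<infinity>), so all of them are realised by elements supported in some fixed [0, D). Dividing
  by the element with the same pattern and translating back by t shortens the support of any
  element of V \<inter> A by k, so by induction V \<inter> A is generated, up to translation by t, by its
  finitely many elements supported in [0, D).\<close>

lemma L_simps [simp]:
  "carrier (L n p) = lamp_carrier n p"
  "x \<otimes>\<^bsub>L n p\<^esub> y = lamp_mult p x y"
  "\<one>\<^bsub>L n p\<^esub> = (\<lambda>z i. 0, 0)"
  by (simp_all add: L_def)

lemma lamp_carrierD:
  assumes "(f, k) \<in> lamp_carrier n p"
  shows "\<And>z i. 0 \<le> f z i" "\<And>z i. f z i < int p" "\<And>z i. n \<le> i \<Longrightarrow> f z i = 0"
    "finite {z. f z \<noteq> (\<lambda>_. 0)}"
  using assms by (auto simp: lamp_carrier_def)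

lemma lamp_carrier_mod: "(f, k) \<in> lamp_carrier n p \<Longrightarrow> f z i mod int p = f z i"
  using lamp_carrierD[of f k n p] by simp

lemma finite_support_translate:
  fixes f :: "int \<Rightarrow> nat \<Rightarrow> int"
  shows "finite {z. f z \<noteq> (\<lambda>_. 0)} \<Longrightarrow> finite {z. f (z - c) \<noteq> (\<lambda>_. 0)}"
  by (rule finite_subset[of _ "(\<lambda>z. z + c) ` {z. f z \<noteq> (\<lambda>_. 0)}"])
     (auto intro: image_eqI[where x = "_ - c"])

lemma lamp_mult_closed:
  assumes p: "p > 0" and x: "(f, k) \<in> lamp_carrier n p" and y: "(g, l) \<in> lamp_carrier n p"
  shows "lamp_mult p (f, k) (g, l) \<in> lamp_carrier n p"
proof -
  have "{z. (\<lambda>i. (f z i + g (z - k) i) mod int p) \<noteq> (\<lambda>_. 0)}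
      \<subseteq> {z. f z \<noteq> (\<lambda>_. 0)} \<union> {z. g (z - k) \<noteq> (\<lambda>_. 0)}"
    by auto
  moreover have "finite ({z. f z \<noteq> (\<lambda>_. 0)} \<union> {z. g (z - k) \<noteq> (\<lambda>_. 0)})"
    using lamp_carrierD(4)[OF x] finite_support_translate[OF lamp_carrierD(4)[OF y]] by simp
  ultimately show ?thesis
    using p lamp_carrierD(3)[OF x] lamp_carrierD(3)[OF y]
    by (auto simp: lamp_mult_def lamp_carrier_def intro: finite_subset)
qed

lemma lamp_inv_closed:
  assumes p: "p > 0" and x: "(f, k) \<in> lamp_carrier n p"
  shows "((\<lambda>z i. (- f (z + k) i) mod int p), - k) \<in> lamp_carrier n p"
proof -
  have "{z. (\<lambda>i. (- f (z + k) i) mod int p) \<noteq> (\<lambda>_. 0)} \<subseteq> {z. f (z - (- k)) \<noteq> (\<lambda>_. 0)}"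
    by auto
  then have "finite {z. (\<lambda>i. (- f (z + k) i) mod int p) \<noteq> (\<lambda>_. 0)}"
    using finite_support_translate[OF lamp_carrierD(4)[OF x], of "- k"] by (rule finite_subset)
  then show ?thesis
    using p lamp_carrierD(3)[OF x] by (auto simp: lamp_carrier_def)
qed

lemma group_L: assumes p: "p > 0" shows "group (L n p)"
proof (rule groupI)
  fix x y assume "x \<in> carrier (L n p)" "y \<in> carrier (L n p)"
  then show "x \<otimes>\<^bsub>L n p\<^esub> y \<in> carrier (L n p)"
    using lamp_mult_closed[OF p] by (cases x, cases y) simp
next
  show "\<one>\<^bsub>L n p\<^esub> \<in> carrier (L n p)" using p by (simp add: lamp_carrier_def)
next
  fix x y z
  show "x \<otimes>\<^bsub>L n p\<^esub> y \<otimes>\<^bsub>L n p\<^esub> z = x \<otimes>\<^bsub>L n p\<^esub> (y \<otimes>\<^bsub>L n p\<^esub> z)"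
    by (auto simp: lamp_mult_def mod_add_left_eq mod_add_right_eq add.assoc diff_diff_eq
        add.commute[of "snd y" "snd x"])
next
  fix x assume "x \<in> carrier (L n p)"
  then obtain f k where x: "x = (f, k)" "(f, k) \<in> lamp_carrier n p" by (cases x) auto
  show "\<one>\<^bsub>L n p\<^esub> \<otimes>\<^bsub>L n p\<^esub> x = x"
    using x by (simp add: lamp_mult_def lamp_carrier_mod)
  show "\<exists>y\<in>carrier (L n p). y \<otimes>\<^bsub>L n p\<^esub> x = \<one>\<^bsub>L n p\<^esub>"
    using lamp_inv_closed[OF p x(2)]
    by (intro bexI[of _ "((\<lambda>z i. (- f (z + k) i) mod int p), - k)"])
       (auto simp: x lamp_mult_def mod_add_left_eq)
qed

lemma inv_L:
  assumes p: "p > 0" and x: "(f, k) \<in> lamp_carrier n p"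
  shows "inv\<^bsub>L n p\<^esub> (f, k) = ((\<lambda>z i. (- f (z + k) i) mod int p), - k)"
  using lamp_inv_closed[OF p x] x
  by (intro group.inv_equality[OF group_L[OF p]]) (auto simp: lamp_mult_def mod_add_left_eq)

lemma snd_mult [simp]: "snd (lamp_mult p x y) = snd x + snd y"
  by (simp add: lamp_mult_def)

lemma snd_inv_L:
  assumes "p > 0" and "x \<in> lamp_carrier n p"
  shows "snd (inv\<^bsub>L n p\<^esub> x) = - snd x"
  using inv_L[OF assms(1), of "fst x" "snd x"] assms(2) by simp

lemma snd_int_pow_L:
  assumes p: "p > 0" and x: "x \<in> lamp_carrier n p"
  shows "snd (x [^]\<^bsub>L n p\<^esub> (q :: int)) = q * snd x"
proof -
  interpret G: group "L n p" by (rule group_L[OF p])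
  have nat_pow: "snd (x [^]\<^bsub>L n p\<^esub> (m :: nat)) = int m * snd x" for m
    by (induction m) (simp_all add: algebra_simps)
  obtain m where "q = int m \<or> q = - int m" by (metis int_cases2)
  then show ?thesis
  proof
    assume "q = int m"
    then show ?thesis by (simp only: int_pow_int nat_pow)
  next
    assume q: "q = - int m"
    have "x [^]\<^bsub>L n p\<^esub> q = inv\<^bsub>L n p\<^esub> (x [^]\<^bsub>L n p\<^esub> m)"
      using G.int_pow_neg_int[of x m] x q by simp
    then show ?thesis
      using snd_inv_L[OF p, of "x [^]\<^bsub>L n p\<^esub> m"] G.nat_pow_closed[of x m] x q nat_pow by simp
  qed
qed

lemma inv_A:
  assumes "p > 0" and "a \<in> A n p"
  shows "inv\<^bsub>L n p\<^esub> a = ((\<lambda>z i. (- fst a z i) mod int p), 0)"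
  using assms inv_L[OF assms(1), of "fst a" 0] by (cases a) (simp add: A_def)

definition shift :: "int \<Rightarrow> lelem \<Rightarrow> lelem" where
  "shift c a = ((\<lambda>z i. fst a (z - c) i), 0)"

definition supported_in :: "lelem \<Rightarrow> int \<Rightarrow> int \<Rightarrow> bool" where
  "supported_in w lo hi \<longleftrightarrow> (\<forall>z i. fst w z i \<noteq> 0 \<longrightarrow> lo \<le> z \<and> z < hi)"

lemma shift_in_A: "a \<in> A n p \<Longrightarrow> shift c a \<in> A n p"
  using finite_support_translate[of "fst a" c]
  by (auto simp: A_def lamp_carrier_def shift_def)

lemma shift_shift: "shift c (shift d a) = shift (c + d) a"
  by (simp add: shift_def diff_diff_eq add.commute)

lemma shift_0: "a \<in> A n p \<Longrightarrow> shift 0 a = a"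
  by (cases a) (simp add: shift_def A_def)

lemma supported_in_shift:
  "supported_in a lo hi \<Longrightarrow> supported_in (shift c a) (lo + c) (hi + c)"
  unfolding supported_in_def shift_def by force

lemma conj_eq_shift:
  assumes p: "p > 0" and t: "t \<in> lamp_carrier n p" and a: "a \<in> A n p"
  shows "t \<otimes>\<^bsub>L n p\<^esub> a \<otimes>\<^bsub>L n p\<^esub> inv\<^bsub>L n p\<^esub> t = shift (snd t) a"
    and "inv\<^bsub>L n p\<^esub> t \<otimes>\<^bsub>L n p\<^esub> a \<otimes>\<^bsub>L n p\<^esub> t = shift (- snd t) a"
proof -
  obtain f k where t': "t = (f, k)" by fastforce
  obtain g where a': "a = (g, 0)" "(g, 0) \<in> lamp_carrier n p"
    using a by (cases a) (auto simp: A_def)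
  note g_mod = lamp_carrier_mod[OF a'(2)]
  show "t \<otimes>\<^bsub>L n p\<^esub> a \<otimes>\<^bsub>L n p\<^esub> inv\<^bsub>L n p\<^esub> t = shift (snd t) a"
    and "inv\<^bsub>L n p\<^esub> t \<otimes>\<^bsub>L n p\<^esub> a \<otimes>\<^bsub>L n p\<^esub> t = shift (- snd t) a"
    using t g_mod unfolding t' inv_L[OF p t[unfolded t']]
    by (auto simp: a' shift_def lamp_mult_def mod_add_left_eq mod_add_right_eq
        mod_diff_left_eq mod_diff_right_eq)
qed

lemma subgroup_shift_closed:
  assumes p: "p > 0" and K: "subgroup K (L n p)" and t: "t \<in> K" and a: "a \<in> K" "a \<in> A n p"
  shows "shift (q * snd t) a \<in> K"
proof -
  have tc: "t \<in> lamp_carrier n p" using subgroup.subset[OF K] t by auto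
  show ?thesis
  proof (induction q rule: int_induct[where k = 0])
    case base
    show ?case using a by (simp add: shift_0)
  next
    case (step1 q)
    have "t \<otimes>\<^bsub>L n p\<^esub> shift (q * snd t) a \<otimes>\<^bsub>L n p\<^esub> inv\<^bsub>L n p\<^esub> t \<in> K"
      using K t step1 by (intro subgroup.m_closed subgroup.m_inv_closed) auto
    then show ?case
      using conj_eq_shift(1)[OF p tc shift_in_A[OF a(2)]] by (simp add: shift_shift algebra_simps)
  next
    case (step2 q)
    have "inv\<^bsub>L n p\<^esub> t \<otimes>\<^bsub>L n p\<^esub> shift (q * snd t) a \<otimes>\<^bsub>L n p\<^esub> t \<in> K"
      using K t step2 by (intro subgroup.m_closed subgroup.m_inv_closed) auto
    then show ?case
      using conj_eq_shift(2)[OF p tc shift_in_A[OF a(2)]] by (simp add: shift_shift algebra_simps)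
  qed
qed

lemma supported_in_mult_inv:
  assumes p: "p > 0" and w: "w \<in> A n p" and u: "u \<in> A n p"
    and "supported_in w lo hi" "supported_in u lo hi"
    and agree: "\<And>z i. lo \<le> z \<Longrightarrow> z < mid \<Longrightarrow> fst u z i = fst w z i"
  shows "supported_in (w \<otimes>\<^bsub>L n p\<^esub> inv\<^bsub>L n p\<^esub> u) mid hi"
proof -
  have "snd w = 0" using w by (simp add: A_def)
  then have fst_eq: "fst (w \<otimes>\<^bsub>L n p\<^esub> inv\<^bsub>L n p\<^esub> u) z i
      = (fst w z i + (- fst u z i) mod int p) mod int p" for z i
    by (simp add: inv_A[OF p u] lamp_mult_def)
  show ?thesis
    using assms(4,5) agree unfolding supported_in_def fst_eq
    by (smt (verit, del_insts) mod_add_right_eq mod_self add.right_inverse mod_0)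
qed

lemma A_supported_from_multiple:
  assumes k: "k > 0" and w: "w \<in> A n p"
  shows "\<exists>q hi. supported_in w (q * k) hi"
proof -
  have "finite {z. fst w z \<noteq> (\<lambda>_. 0)}"
    using w by (cases w) (auto simp: A_def lamp_carrier_def)
  then obtain B where B: "\<And>z. fst w z \<noteq> (\<lambda>_. 0) \<Longrightarrow> \<bar>z\<bar> < B"
    unfolding finite_int_iff_bounded by auto
  have "- \<bar>B\<bar> * k \<le> - \<bar>B\<bar>" using k by (simp add: mult_le_cancel_left1)
  then have "supported_in w (- \<bar>B\<bar> * k) B"
    unfolding supported_in_def
  proof (intro allI impI)
    fix z i assume "fst w z i \<noteq> 0"
    then have "\<bar>z\<bar> < B" using B by force
    then show "- \<bar>B\<bar> * k \<le> z \<and> z < B" using \<open>- \<bar>B\<bar> * k \<le> - \<bar>B\<bar>\<close> by linarith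
  qed
  then show ?thesis by blast
qed

lemma finite_configurations:
  assumes "finite Z0"
  shows "finite {f :: int \<Rightarrow> nat \<Rightarrow> int. (\<forall>z i. 0 \<le> f z i \<and> f z i < int p)
     \<and> (\<forall>z i. z \<notin> Z0 \<or> n \<le> i \<longrightarrow> f z i = 0)}" (is "finite ?S")
proof -
  let ?D = "Z0 \<times> {..<n}"
  define extend :: "(int \<times> nat \<Rightarrow> int) \<Rightarrow> int \<Rightarrow> nat \<Rightarrow> int" where
    "extend g z i = (if (z, i) \<in> ?D then g (z, i) else 0)" for g z i
  have "?S \<subseteq> extend ` (PiE ?D (\<lambda>_. {0..<int p}))"
  proof
    fix f assume f: "f \<in> ?S"
    let ?g = "\<lambda>x. if x \<in> ?D then f (fst x) (snd x) else undefined"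
    have "?g \<in> PiE ?D (\<lambda>_. {0..<int p})" using f unfolding PiE_def extensional_def by auto
    moreover have "f = extend ?g" using f unfolding extend_def by (auto simp: fun_eq_iff)
    ultimately show "f \<in> extend ` (PiE ?D (\<lambda>_. {0..<int p}))" by blast
  qed
  moreover have "finite (PiE ?D (\<lambda>_. {0..<int p}))"
    using assms by (intro finite_PiE) auto
  ultimately show ?thesis using finite_subset by blast
qed

lemma finite_supported_A: "finite {w \<in> A n p. supported_in w lo hi}"
proof -
  let ?S = "{f :: int \<Rightarrow> nat \<Rightarrow> int. (\<forall>z i. 0 \<le> f z i \<and> f z i < int p)
     \<and> (\<forall>z i. z \<notin> {lo..<hi} \<or> n \<le> i \<longrightarrow> f z i = 0)}"
  have "{w \<in> A n p. supported_in w lo hi} \<subseteq> (\<lambda>f. (f, 0)) ` ?S"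
  proof
    fix w assume w: "w \<in> {w \<in> A n p. supported_in w lo hi}"
    obtain f where f: "w = (f, 0)" "(f, 0) \<in> lamp_carrier n p"
      using w by (cases w) (auto simp: A_def)
    have "f z i = 0" if "z \<notin> {lo..<hi}" for z i
      using w that unfolding f(1) supported_in_def by auto
    then have "f \<in> ?S" using lamp_carrierD[OF f(2)] by auto
    then show "w \<in> (\<lambda>f. (f, 0)) ` ?S" using f(1) by blast
  qed
  moreover have "finite ((\<lambda>f. (f, 0)) ` ?S)" by (intro finite_imageI finite_configurations) simp
  ultimately show ?thesis by (rule finite_subset)
qed

definition patterns_realised_within :: "lelem set \<Rightarrow> int \<Rightarrow> int \<Rightarrow> bool" where
  "patterns_realised_within M k D \<longleftrightarrow> (\<forall>w\<in>M. \<forall>N. supported_in w 0 N \<longrightarrow>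
     (\<exists>u\<in>M. supported_in u 0 D \<and> (\<forall>z i. 0 \<le> z \<longrightarrow> z < k \<longrightarrow> fst u z i = fst w z i)))"

lemma exists_pattern_bound:
  assumes M: "M \<subseteq> A n p"
  shows "\<exists>D. patterns_realised_within M k D"
proof -
  define restr :: "lelem \<Rightarrow> int \<Rightarrow> nat \<Rightarrow> int" where
    "restr w z i = (if 0 \<le> z \<and> z < k then fst w z i else 0)" for w z i
  define E where "E = restr ` {w \<in> M. \<exists>N. supported_in w 0 N}"
  have "E \<subseteq> {f. (\<forall>z i. 0 \<le> f z i \<and> f z i < int p) \<and> (\<forall>z i. z \<notin> {0..<k} \<or> n \<le> i \<longrightarrow> f z i = 0)}"
  proof
    fix e assume "e \<in> E"
    then obtain w where w: "w \<in> A n p" "e = restr w" using M unfolding E_def by blast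
    then have c: "(fst w, snd w) \<in> lamp_carrier n p" by (cases w) (simp add: A_def)
    have "0 < int p" using lamp_carrierD(1,2)[OF c, of 0 0] by linarith
    then show "e \<in> {f. (\<forall>z i. 0 \<le> f z i \<and> f z i < int p) \<and> (\<forall>z i. z \<notin> {0..<k} \<or> n \<le> i \<longrightarrow> f z i = 0)}"
      using lamp_carrierD[OF c] unfolding w(2) restr_def by auto
  qed
  then have "finite E" by (rule finite_subset) (intro finite_configurations, simp)
  have "\<forall>e\<in>E. \<exists>N u. u \<in> M \<and> supported_in u 0 N \<and> restr u = e" unfolding E_def by blast
  then obtain bound where bound: "\<And>e. e \<in> E \<Longrightarrow> \<exists>u\<in>M. supported_in u 0 (bound e) \<and> restr u = e"
    by metis
  have "\<exists>u\<in>M. supported_in u 0 (Max (bound ` E))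
      \<and> (\<forall>z i. 0 \<le> z \<longrightarrow> z < k \<longrightarrow> fst u z i = fst w z i)"
    if w: "w \<in> M" "supported_in w 0 N" for w N
  proof -
    have e: "restr w \<in> E" using w unfolding E_def by blast
    then obtain u where u: "u \<in> M" "supported_in u 0 (bound (restr w))" "restr u = restr w"
      using bound by blast
    have "bound (restr w) \<le> Max (bound ` E)" using \<open>finite E\<close> e by simp
    then have "supported_in u 0 (Max (bound ` E))"
      using u(2) unfolding supported_in_def by force
    moreover have "fst u z i = fst w z i" if "0 \<le> z" "z < k" for z i
      using fun_cong[OF fun_cong[OF u(3)], of z i] that by (simp add: restr_def)
    ultimately show ?thesis using u(1) by blast
  qed
  then show ?thesis unfolding patterns_realised_within_def by blast
qed

lemma subgroup_A_part_supported_nonneg: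
  assumes p: "p > 0" and V: "subgroup V (L n p)" and K: "subgroup K (L n p)"
    and t: "t \<in> V" "t \<in> K" "snd t > 0"
    and pattern: "patterns_realised_within (V \<inter> A n p) (snd t) D"
    and base: "{w \<in> V \<inter> A n p. supported_in w 0 D} \<subseteq> K"
    and w: "w \<in> V \<inter> A n p" "supported_in w 0 N"
  shows "w \<in> K"
  using w
proof (induction "nat N" arbitrary: w N rule: less_induct)
  case less
  interpret G: group "L n p" by (rule group_L[OF p])
  have Vc: "V \<subseteq> lamp_carrier n p" using subgroup.subset[OF V] by simp
  show ?case
  proof (cases "supported_in w 0 D")
    case True
    then show ?thesis using base less.prems by blast
  next
    case False
    then obtain z i where "fst w z i \<noteq> 0" "\<not> (0 \<le> z \<and> z < D)"
      unfolding supported_in_def by blast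
    then have "D < N" "0 < N" using less.prems(2) unfolding supported_in_def by force+
    obtain u where u: "u \<in> V \<inter> A n p" "supported_in u 0 D"
      and agree: "\<And>z i. 0 \<le> z \<Longrightarrow> z < snd t \<Longrightarrow> fst u z i = fst w z i"
      using pattern less.prems unfolding patterns_realised_within_def by blast
    have uK: "u \<in> K" using base u by blast
    have "supported_in u 0 N" using u(2) \<open>D < N\<close> unfolding supported_in_def by force
    define v where "v = w \<otimes>\<^bsub>L n p\<^esub> inv\<^bsub>L n p\<^esub> u"
    have vV: "v \<in> V" unfolding v_def using V u less.prems
      by (intro subgroup.m_closed subgroup.m_inv_closed) auto
    have "snd v = 0"
      using less.prems u snd_inv_L[OF p] by (auto simp: v_def A_def)
    then have vA: "v \<in> A n p" using vV Vc by (auto simp: A_def)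
    have "supported_in v (snd t) N"
      unfolding v_def using less.prems u \<open>supported_in u 0 N\<close>
      by (intro supported_in_mult_inv[OF p]) (auto intro: agree)
    then have "supported_in (shift (- 1 * snd t) v) 0 (N - snd t)"
      using supported_in_shift[of v "snd t" N "- 1 * snd t"] by simp
    moreover have "shift (- 1 * snd t) v \<in> V \<inter> A n p"
      using subgroup_shift_closed[OF p V t(1) vV vA] shift_in_A[OF vA] by blast
    moreover have "nat (N - snd t) < nat N" using \<open>0 < N\<close> t(3) by simp
    ultimately have "shift (- 1 * snd t) v \<in> K" using less.hyps by blast
    then have "shift (1 * snd t) (shift (- 1 * snd t) v) \<in> K"
      using subgroup_shift_closed[OF p K t(2)] shift_in_A[OF vA] by blast
    then have vK: "v \<in> K" by (simp add: shift_shift shift_0[OF vA])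
    have "w = v \<otimes>\<^bsub>L n p\<^esub> u"
      using G.inv_solve_right[of v w u] less.prems u Vc vV by (auto simp: v_def)
    then show ?thesis using subgroup.m_closed[OF K vK uK] by simp
  qed
qed

lemma subgroup_A_part_subset:
  assumes p: "p > 0" and V: "subgroup V (L n p)" and K: "subgroup K (L n p)"
    and t: "t \<in> V" "t \<in> K" "snd t > 0"
    and pattern: "patterns_realised_within (V \<inter> A n p) (snd t) D"
    and base: "{w \<in> V \<inter> A n p. supported_in w 0 D} \<subseteq> K"
  shows "V \<inter> A n p \<subseteq> K"
proof
  fix w assume w: "w \<in> V \<inter> A n p"
  obtain q hi where "supported_in w (q * snd t) hi"
    using A_supported_from_multiple[OF t(3)] w by blast
  then have "supported_in (shift (- q * snd t) w) 0 (hi - q * snd t)"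
    using supported_in_shift[of w "q * snd t" hi "- q * snd t"] by simp
  moreover have "shift (- q * snd t) w \<in> V \<inter> A n p"
    using subgroup_shift_closed[OF p V t(1)] shift_in_A w by blast
  ultimately have "shift (- q * snd t) w \<in> K"
    by (intro subgroup_A_part_supported_nonneg[OF p V K t pattern base]) auto
  then have "shift (q * snd t) (shift (- q * snd t) w) \<in> K"
    using subgroup_shift_closed[OF p K t(2)] shift_in_A w by blast
  then show "w \<in> K" using w shift_0[of w n p] by (simp add: shift_shift)
qed

lemma snd_dvd_if_minimal:
  assumes p: "p > 0" and V: "subgroup V (L n p)" and t: "t \<in> V" "snd t > 0"
    and minimal: "\<And>h. h \<in> V \<Longrightarrow> 0 < snd h \<Longrightarrow> snd t \<le> snd h"
    and h: "h \<in> V"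
  shows "snd t dvd snd h"
proof -
  interpret G: group "L n p" by (rule group_L[OF p])
  have Vc: "V \<subseteq> lamp_carrier n p" using subgroup.subset[OF V] by simp
  define q where "q = snd h div snd t"
  define r where "r = h \<otimes>\<^bsub>L n p\<^esub> inv\<^bsub>L n p\<^esub> (t [^]\<^bsub>L n p\<^esub> q)"
  have "r \<in> V" unfolding r_def using V h t
    by (intro subgroup.m_closed subgroup.m_inv_closed G.subgroup_int_pow_closed) auto
  have tc: "t \<in> lamp_carrier n p" using t Vc by auto
  then have "t [^]\<^bsub>L n p\<^esub> q \<in> lamp_carrier n p" using G.int_pow_closed[of t q] by simp
  then have "snd r = snd h mod snd t"
    using tc by (simp add: r_def q_def snd_inv_L[OF p] snd_int_pow_L[OF p] minus_div_mult_eq_mod)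
  then have "snd r < snd t" "0 \<le> snd r" using t(2) by simp_all
  then have "snd r = 0" using minimal[OF \<open>r \<in> V\<close>] by fastforce
  then show ?thesis using \<open>snd r = snd h mod snd t\<close> by (simp add: dvd_eq_mod_eq_0)
qed

lemma subgroup_subset_if_A_part_subset:
  assumes p: "p > 0" and V: "subgroup V (L n p)" and K: "subgroup K (L n p)"
    and t: "t \<in> V" "t \<in> K" and dvd: "\<And>h. h \<in> V \<Longrightarrow> snd t dvd snd h"
    and A_part: "V \<inter> A n p \<subseteq> K"
  shows "V \<subseteq> K"
proof
  interpret G: group "L n p" by (rule group_L[OF p])
  have Vc: "V \<subseteq> lamp_carrier n p" using subgroup.subset[OF V] by simp
  fix h assume h: "h \<in> V"
  then obtain q where q: "snd h = snd t * q" using dvd by blast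
  let ?y = "t [^]\<^bsub>L n p\<^esub> q"
  define a where "a = h \<otimes>\<^bsub>L n p\<^esub> inv\<^bsub>L n p\<^esub> ?y"
  have yV: "?y \<in> V" and yK: "?y \<in> K"
    using G.subgroup_int_pow_closed V K t by auto
  have aV: "a \<in> V" unfolding a_def using V h yV by (intro subgroup.m_closed subgroup.m_inv_closed)
  have "?y \<in> lamp_carrier n p" "t \<in> lamp_carrier n p" using yV t Vc by auto
  then have "snd a = 0" using q by (simp add: a_def snd_inv_L[OF p] snd_int_pow_L[OF p])
  then have "a \<in> K" using aV A_part Vc by (auto simp: A_def)
  moreover have "h = a \<otimes>\<^bsub>L n p\<^esub> ?y"
    using G.inv_solve_right[of a h ?y] aV h yV Vc by (auto simp: a_def)
  ultimately show "h \<in> K" using subgroup.m_closed[OF K _ yK] by simp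
qed

lemma exists_minimal_positive_snd:
  assumes p: "p > 0" and V: "subgroup V (L n p)" and VA: "\<not> V \<subseteq> A n p"
  obtains t where "t \<in> V" "snd t > 0" "\<And>h. h \<in> V \<Longrightarrow> 0 < snd h \<Longrightarrow> snd t \<le> snd h"
proof -
  define P where "P m \<longleftrightarrow> (\<exists>h\<in>V. 0 < snd h \<and> snd h = int m)" for m
  have Vc: "V \<subseteq> lamp_carrier n p" using subgroup.subset[OF V] by simp
  obtain x where x: "x \<in> V" "snd x \<noteq> 0" using VA Vc by (auto simp: A_def)
  have "inv\<^bsub>L n p\<^esub> x \<in> V" "snd (inv\<^bsub>L n p\<^esub> x) = - snd x"
    using subgroup.m_inv_closed[OF V x(1)] snd_inv_L[OF p, of x] x(1) Vc by auto
  then have "P (nat \<bar>snd x\<bar>)" using x unfolding P_def by (cases "snd x > 0") force+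
  then have "P (LEAST m. P m)" by (rule LeastI)
  then obtain t where t: "t \<in> V" "0 < snd t" "snd t = int (LEAST m. P m)"
    unfolding P_def by blast
  have "snd t \<le> snd h" if "h \<in> V" "0 < snd h" for h
  proof -
    have "P (nat (snd h))" using that unfolding P_def by force
    then have "(LEAST m. P m) \<le> nat (snd h)" by (rule Least_le)
    then show ?thesis using t(3) that(2) by linarith
  qed
  then show ?thesis using that t by blast
qed

lemma subgroup_not_in_A_finitely_generated:
  assumes p: "p > 0" and V: "subgroup V (L n p)" and VA: "\<not> V \<subseteq> A n p"
  shows "\<exists>S. finite S \<and> V = generate (L n p) S"
proof -
  obtain t where t: "t \<in> V" "snd t > 0"
    and minimal: "\<And>h. h \<in> V \<Longrightarrow> 0 < snd h \<Longrightarrow> snd t \<le> snd h"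
    using exists_minimal_positive_snd[OF p V VA] by blast
  obtain D where pattern: "patterns_realised_within (V \<inter> A n p) (snd t) D"
    using exists_pattern_bound[of "V \<inter> A n p" n p "snd t"] by blast
  define S where "S = insert t {w \<in> V \<inter> A n p. supported_in w 0 D}"
  have "finite S"
    unfolding S_def using finite_supported_A[of n p 0 D] by (auto intro: finite_subset)
  moreover have "V = generate (L n p) S"
  proof (rule group.generateI[OF group_L[OF p] V])
    show "S \<subseteq> V" using t unfolding S_def by blast
  next
    fix K assume K: "subgroup K (L n p)" "S \<subseteq> K"
    then have "V \<inter> A n p \<subseteq> K"
      unfolding S_def by (intro subgroup_A_part_subset[OF p V K(1) t(1) _ t(2) pattern]) auto
    then show "V \<subseteq> K"
      using K t snd_dvd_if_minimal[OF p V t minimal] unfolding S_def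
      by (intro subgroup_subset_if_A_part_subset[OF p V K(1) t(1)]) auto
  qed
  ultimately show ?thesis by blast
qed

lemma sub_converges_generate_eventually_subset:
  assumes G: "group G" and S: "finite S" "S \<subseteq> carrier G"
    and Vs: "\<And>m. subgroup (Vs m) G"
    and conv: "sub_converges G Vs (generate G S)"
  shows "\<exists>m0. \<forall>m\<ge>m0. generate G S \<subseteq> Vs m"
proof -
  have "\<forall>g\<in>S. eventually (\<lambda>m. g \<in> Vs m) sequentially"
  proof
    fix g assume g: "g \<in> S"
    then have "eventually (\<lambda>m. (g \<in> Vs m) = (g \<in> generate G S)) sequentially"
      using conv S(2) unfolding sub_converges_def by blast
    then show "eventually (\<lambda>m. g \<in> Vs m) sequentially"
      using generate.incl[OF g, of G] by (auto elim: eventually_mono)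
  qed
  then have "eventually (\<lambda>m. S \<subseteq> Vs m) sequentially"
    using eventually_ball_finite[OF S(1)] by (simp add: subset_eq)
  then obtain m0 where "\<And>m. m \<ge> m0 \<Longrightarrow> S \<subseteq> Vs m"
    unfolding eventually_sequentially by blast
  then show ?thesis using group.generate_subgroup_incl[OF G _ Vs] by blast
qed

theorem lemma6p13:
  fixes n p :: nat and Vs :: "nat \<Rightarrow> lelem set" and V :: "lelem set"
  assumes "prime p" and "n \<ge> 1"
    and "\<forall>m. Vs m \<in> Zset n p" and "V \<in> Zset n p"
    and "sub_converges (L n p) Vs V"
  shows "\<exists>m0. \<forall>m\<ge>m0. V \<subseteq> Vs m"
proof -
  have p: "p > 0" using assms(1) prime_gt_0_nat by blast
  have V: "subgroup V (L n p)" "\<not> V \<subseteq> A n p"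
    using assms(4) unfolding Zset_def Sub_def by auto
  have Vs: "subgroup (Vs m) (L n p)" for m
    using assms(3) unfolding Zset_def Sub_def by auto
  obtain S where S: "finite S" "V = generate (L n p) S"
    using subgroup_not_in_A_finitely_generated[OF p V] by blast
  have "S \<subseteq> carrier (L n p)"
    using S(2) generate.incl[of _ S "L n p"] subgroup.subset[OF V(1)] by blast
  then show ?thesis
    using sub_converges_generate_eventually_subset[OF group_L[OF p] S(1) _ Vs] assms(5) S(2)
    by simp
qed

end
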